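(* TC-Approval is Pareto optimal, while CO-Approval and UC-Approval are not Pareto optimal.
   Context: A tournament $T=(V(T),\succ)$ is a finite set of candidates with an asymmetric and complete binary relation $\succ$. Tournament solutions: the top cycle $TC(T)$ is the unique minimal nonempty $X\subseteq V(T)$ with $x\succ y$ for all $x\in X$, $y\notin X$; the Copeland set $CO(T)$ is the set of candidates of maximum outdegree; the uncovered set $UC(T)$ is the set of kings, where $a$ is a king if for every $b\neq a$, either $a\succ b$ or there is $c$ with $a\succ c\succ b$. An election $\mathcal{E}=(\mathcal{C},\mathcal{T})$ has a finite candidate set and a finite list of votes, each a tournament on $\mathcal{C}$. For a tournament solution $f$, $f$-Approval gives candidate $c$ score $|\{T\in\mathcal{T}: c\in f(T)\}|$ (with multiplicity); winners are those of highest score. A voting correspondence $\varphi$ is Pareto optimal if for every election $\mathcal{E}=(\mathcal{C},\mathcal{T})$ and every two candidates $a,b$ such that $a\succ b$ in every vote of $\mathcal{T}$, $a\notin\varphi(\mathcal{E})$ implies $b\notin\varphi(\mathcal{E})$. *)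

theory Defs
  imports Main
begin

text \<open>A tournament on a candidate set C is a relation r (r x y meaning x beats y)
  that is asymmetric and complete on C. Only its values on C matter.\<close>
definition tournament :: "'a set \<Rightarrow> ('a \<Rightarrow> 'a \<Rightarrow> bool) \<Rightarrow> bool" where
  "tournament C r \<longleftrightarrow>
     (\<forall>x\<in>C. \<forall>y\<in>C. r x y \<longrightarrow> \<not> r y x) \<and>
     (\<forall>x\<in>C. \<forall>y\<in>C. x \<noteq> y \<longrightarrow> r x y \<or> r y x)"

type_synonym 'a tsol = "'a set \<Rightarrow> ('a \<Rightarrow> 'a \<Rightarrow> bool) \<Rightarrow> 'a set"

definition dominant :: "'a set \<Rightarrow> ('a \<Rightarrow> 'a \<Rightarrow> bool) \<Rightarrow> 'a set \<Rightarrow> bool" where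
  "dominant C r X \<longleftrightarrow> X \<subseteq> C \<and> X \<noteq> {} \<and> (\<forall>x\<in>X. \<forall>y\<in>C - X. r x y)"

definition top_cycle :: "'a tsol" where
  "top_cycle C r = (THE X. dominant C r X \<and> (\<forall>Y. dominant C r Y \<longrightarrow> \<not> Y \<subset> X))"

definition outdeg :: "'a set \<Rightarrow> ('a \<Rightarrow> 'a \<Rightarrow> bool) \<Rightarrow> 'a \<Rightarrow> nat" where
  "outdeg C r x = card {y\<in>C. r x y}"

definition copeland :: "'a tsol" where
  "copeland C r = {x\<in>C. \<forall>y\<in>C. outdeg C r y \<le> outdeg C r x}"

text \<open>Uncovered set: the set of kings.\<close>
definition uncovered :: "'a tsol" where
  "uncovered C r = {a\<in>C. \<forall>b\<in>C. b \<noteq> a \<longrightarrow> r a b \<or> (\<exists>c\<in>C. r a c \<and> r c b)}"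

definition election :: "'a set \<Rightarrow> ('a \<Rightarrow> 'a \<Rightarrow> bool) list \<Rightarrow> bool" where
  "election C vs \<longleftrightarrow> finite C \<and> (\<forall>T\<in>set vs. tournament C T)"

definition approval_score :: "'a tsol \<Rightarrow> 'a set \<Rightarrow> ('a \<Rightarrow> 'a \<Rightarrow> bool) list \<Rightarrow> 'a \<Rightarrow> nat" where
  "approval_score f C vs c = length (filter (\<lambda>T. c \<in> f C T) vs)"

definition approval :: "'a tsol \<Rightarrow> 'a set \<Rightarrow> ('a \<Rightarrow> 'a \<Rightarrow> bool) list \<Rightarrow> 'a set" where
  "approval f C vs = {c\<in>C. \<forall>d\<in>C. approval_score f C vs d \<le> approval_score f C vs c}"

definition pareto_optimal :: "('a set \<Rightarrow> ('a \<Rightarrow> 'a \<Rightarrow> bool) list \<Rightarrow> 'a set) \<Rightarrow> bool" where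
  "pareto_optimal \<phi> \<longleftrightarrow>
     (\<forall>C vs. election C vs \<longrightarrow>
        (\<forall>a\<in>C. \<forall>b\<in>C. (\<forall>T\<in>set vs. T a b) \<longrightarrow> a \<notin> \<phi> C vs \<longrightarrow> b \<notin> \<phi> C vs))"

end

theory Submission
  imports Defs
begin

text \<open>Dominant sets of a tournament form a chain, so the top cycle is the least dominant set;
  anyone beating a member of a dominant set lies in it. Hence, if a beats b in every vote, a is
  in the top cycle of every vote where b is, and a scores at least as much as b. For Copeland and
  the uncovered set a single four-candidate vote suffices as counterexample: there 0 beats 1, but
  1 is chosen and 0 is not.\<close>

lemma dominant_subset_or_superset:
  assumes "tournament C r" "dominant C r X" "dominant C r Y"
  shows "X \<subseteq> Y \<or> Y \<subseteq> X"
proof (rule ccontr)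
  assume "\<not> (X \<subseteq> Y \<or> Y \<subseteq> X)"
  then obtain x y where "x \<in> X" "x \<notin> Y" "y \<in> Y" "y \<notin> X" by blast
  with assms show False unfolding dominant_def tournament_def by blast
qed

lemma top_cycle_dominant:
  assumes "finite C" "C \<noteq> {}" "tournament C r"
  shows "dominant C r (top_cycle C r)"
proof -
  let ?D = "{X. dominant C r X}"
  have "C \<in> ?D" using assms(2) by (auto simp: dominant_def)
  moreover have "?D \<subseteq> Pow C" by (auto simp: dominant_def)
  then have "finite ?D" using assms(1) by (simp add: finite_subset)
  ultimately obtain X where X: "dominant C r X" and minimal: "\<forall>Y. dominant C r Y \<longrightarrow> \<not> Y \<subset> X"
    using finite_has_minimal2[of ?D C] by blast
  have "top_cycle C r = X"
    unfolding top_cycle_def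
  proof (rule the_equality)
    show "dominant C r X \<and> (\<forall>Y. dominant C r Y \<longrightarrow> \<not> Y \<subset> X)" using X minimal by blast
  next
    fix Z assume "dominant C r Z \<and> (\<forall>Y. dominant C r Y \<longrightarrow> \<not> Y \<subset> Z)"
    then show "Z = X" using X minimal dominant_subset_or_superset[OF assms(3), of X Z] by blast
  qed
  with X show ?thesis by simp
qed

lemma dominant_closed_under_beating:
  assumes "tournament C r" "dominant C r X" "b \<in> X" "a \<in> C" "r a b"
  shows "a \<in> X"
  using assms unfolding tournament_def dominant_def by blast

lemma approval_score_mono:
  assumes "\<forall>T\<in>set vs. b \<in> f C T \<longrightarrow> a \<in> f C T"
  shows "approval_score f C vs b \<le> approval_score f C vs a"
  using assms unfolding approval_score_def by (induction vs) auto

lemma pareto_optimal_approvalI: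
  assumes "\<And>C r a b. finite C \<Longrightarrow> tournament C r \<Longrightarrow> a \<in> C \<Longrightarrow> r a b \<Longrightarrow> b \<in> f C r
             \<Longrightarrow> a \<in> f C r"
  shows "pareto_optimal (approval f)"
  unfolding pareto_optimal_def
proof (intro allI impI ballI)
  fix C vs a b
  assume "election C vs" "a \<in> C" "b \<in> C" "\<forall>T\<in>set vs. T a b" "a \<notin> approval f C vs"
  then have "approval_score f C vs b \<le> approval_score f C vs a"
    by (intro approval_score_mono) (auto simp: election_def intro: assms)
  with \<open>a \<notin> approval f C vs\<close> \<open>a \<in> C\<close> show "b \<notin> approval f C vs"
    unfolding approval_def by force
qed

lemma approval_single_vote:
  assumes "f C T \<subseteq> C" "f C T \<noteq> {}"
  shows "approval f C [T] = f C T"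
  using assms unfolding approval_def approval_score_def by auto

lemma not_pareto_optimal_approvalI:
  assumes "finite C" "tournament C T" "f C T \<subseteq> C"
    and "a \<in> C" "T a b" "a \<notin> f C T" "b \<in> f C T"
  shows "\<not> pareto_optimal (approval f)"
proof
  assume "pareto_optimal (approval f)"
  moreover have "election C [T]" using assms(1,2) by (simp add: election_def)
  moreover have "b \<in> C" "\<forall>T'\<in>set [T]. T' a b" using assms(3,5,7) by auto
  ultimately have "a \<notin> approval f C [T] \<longrightarrow> b \<notin> approval f C [T]"
    using assms(4) unfolding pareto_optimal_def by blast
  moreover have "approval f C [T] = f C T" using assms(3,7) by (intro approval_single_vote) auto
  ultimately show False using assms(6,7) by simp
qed

lemma pareto_optimal_approval_top_cycle: "pareto_optimal (approval top_cycle)"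
proof (rule pareto_optimal_approvalI)
  fix C r and a b :: 'a
  assume "finite C" "tournament C r" "a \<in> C" "r a b" "b \<in> top_cycle C r"
  then show "a \<in> top_cycle C r"
    using top_cycle_dominant dominant_closed_under_beating by (metis empty_iff)
qed

definition copeland_counterexample :: "nat \<Rightarrow> nat \<Rightarrow> bool" where
  "copeland_counterexample x y \<longleftrightarrow> (x, y) \<in> {(0,1), (1,2), (1,3), (2,0), (3,0), (2,3)}"

definition uncovered_counterexample :: "nat \<Rightarrow> nat \<Rightarrow> bool" where
  "uncovered_counterexample x y \<longleftrightarrow> (x, y) \<in> {(0,1), (2,0), (2,1), (1,3), (3,2), (3,0)}"

lemma copeland_of_copeland_counterexample:
  "copeland {0,1,2,3} copeland_counterexample = {1,2}"
proof -
  have "{y \<in> {0,1,2,3}. copeland_counterexample 0 y} = {1}"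
       "{y \<in> {0,1,2,3}. copeland_counterexample 1 y} = {2,3}"
       "{y \<in> {0,1,2,3}. copeland_counterexample 2 y} = {0,3}"
       "{y \<in> {0,1,2,3}. copeland_counterexample 3 y} = {0}"
    by (auto simp: copeland_counterexample_def)
  then have "outdeg {0,1,2,3} copeland_counterexample 0 = 1"
            "outdeg {0,1,2,3} copeland_counterexample 1 = 2"
            "outdeg {0,1,2,3} copeland_counterexample 2 = 2"
            "outdeg {0,1,2,3} copeland_counterexample 3 = 1"
    by (simp_all add: outdeg_def)
  then show ?thesis unfolding copeland_def by auto
qed

lemma uncovered_of_uncovered_counterexample:
  "uncovered {0,1,2,3} uncovered_counterexample = {1,2,3}"
  unfolding uncovered_def uncovered_counterexample_def by auto

lemma not_pareto_optimal_approval_copeland: "\<not> pareto_optimal (approval (copeland :: nat tsol))"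
  using copeland_of_copeland_counterexample
  by (intro not_pareto_optimal_approvalI[of "{0,1,2,3}" copeland_counterexample _ 0 1])
     (auto simp: copeland_counterexample_def tournament_def)

lemma not_pareto_optimal_approval_uncovered: "\<not> pareto_optimal (approval (uncovered :: nat tsol))"
  using uncovered_of_uncovered_counterexample
  by (intro not_pareto_optimal_approvalI[of "{0,1,2,3}" uncovered_counterexample _ 0 1])
     (auto simp: uncovered_counterexample_def tournament_def)

theorem theorem4:
  shows "pareto_optimal (approval (top_cycle :: 'a tsol))
       \<and> \<not> pareto_optimal (approval (copeland :: nat tsol))
       \<and> \<not> pareto_optimal (approval (uncovered :: nat tsol))"
  using pareto_optimal_approval_top_cycle not_pareto_optimal_approval_copeland
    not_pareto_optimal_approval_uncovered by blast

end
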